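(* Let $K$ be a simplicial complex on the ground set $[m]$ whose Alexander dual $K^{\circ}$ is vertex decomposable, and let $v$ be a shedding vertex of $K^{\circ}$. Then $\mathrm{link}_K(v)$ and $K\setminus v$ (as complexes on $[m]\setminus\{v\}$) have vertex decomposable Alexander duals (taken with respect to the ground set $[m]\setminus\{v\}$).
   Context: A simplicial complex $K$ on a finite ground set $V$ is a family of subsets of $V$ closed under taking subsets; its Alexander dual is $K^{\circ}=\{\sigma\subseteq V:V\setminus\sigma\notin K\}$. For a vertex $v$, the deletion $K\setminus v=\{\sigma\in K: v\notin\sigma\}$ and the link $\mathrm{link}_K(v)=\{\sigma\in K: v\notin\sigma,\ \sigma\cup\{v\}\in K\}$ are complexes on $V\setminus\{v\}$. A complex $K$ is vertex decomposable if either (i) $K$ is a simplex (all subsets of some set) or $K=\{\emptyset\}$, or (ii) there is a vertex $v$, called a shedding vertex, such that $K\setminus v$ and $\mathrm{link}_K(v)$ are vertex decomposable and no facet (inclusion-maximal face) of $\mathrm{link}_K(v)$ is a facet of $K\setminus v$. *)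

theory Defs
  imports Main
begin

definition simplicial_complex :: "'a set \<Rightarrow> 'a set set \<Rightarrow> bool" where
  "simplicial_complex V K \<longleftrightarrow> K \<subseteq> Pow V \<and> (\<forall>\<sigma>\<in>K. \<forall>\<tau>. \<tau> \<subseteq> \<sigma> \<longrightarrow> \<tau> \<in> K)"

definition alexander_dual :: "'a set \<Rightarrow> 'a set set \<Rightarrow> 'a set set" where
  "alexander_dual V K = {\<sigma>. \<sigma> \<subseteq> V \<and> V - \<sigma> \<notin> K}"

definition deletion :: "'a set set \<Rightarrow> 'a \<Rightarrow> 'a set set" where
  "deletion K v = {\<sigma>\<in>K. v \<notin> \<sigma>}"

definition link :: "'a set set \<Rightarrow> 'a \<Rightarrow> 'a set set" where
  "link K v = {\<sigma>\<in>K. v \<notin> \<sigma> \<and> insert v \<sigma> \<in> K}"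

definition facet :: "'a set \<Rightarrow> 'a set set \<Rightarrow> bool" where
  "facet F K \<longleftrightarrow> F \<in> K \<and> (\<forall>G\<in>K. F \<subseteq> G \<longrightarrow> G = F)"

inductive vertex_decomposable :: "'a set \<Rightarrow> 'a set set \<Rightarrow> bool" where
  simplex: "S \<subseteq> V \<Longrightarrow> K = Pow S \<Longrightarrow> vertex_decomposable V K"
| empty_face: "K = {{}} \<Longrightarrow> vertex_decomposable V K"
| shed: "v \<in> V \<Longrightarrow> vertex_decomposable (V - {v}) (deletion K v)
         \<Longrightarrow> vertex_decomposable (V - {v}) (link K v)
         \<Longrightarrow> (\<forall>F. facet F (link K v) \<longrightarrow> \<not> facet F (deletion K v))
         \<Longrightarrow> vertex_decomposable V K"

definition shedding_vertex :: "'a set \<Rightarrow> 'a set set \<Rightarrow> 'a \<Rightarrow> bool" where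
  "shedding_vertex V K v \<longleftrightarrow> v \<in> V
     \<and> vertex_decomposable (V - {v}) (deletion K v)
     \<and> vertex_decomposable (V - {v}) (link K v)
     \<and> (\<forall>F. facet F (link K v) \<longrightarrow> \<not> facet F (deletion K v))"

end

theory Submission
  imports Defs
begin

text \<open>Alexander duality on V - {v} exchanges link and deletion at v: complements satisfy
  V - insert v \<sigma> = V - {v} - \<sigma>, and closure of K under subsets supplies the one inclusion that is
  not a mere rewriting of complements. So the two vertex decomposable pieces of a shedding vertex
  of the dual of K are exactly the duals of the deletion and the link of K.\<close>

lemma simplicial_complex_subset_closed:
  "simplicial_complex V K \<Longrightarrow> \<sigma> \<in> K \<Longrightarrow> \<tau> \<subseteq> \<sigma> \<Longrightarrow> \<tau> \<in> K"
  unfolding simplicial_complex_def by blast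

lemma alexander_dual_link:
  assumes K: "simplicial_complex V K" and "v \<in> V"
  shows "alexander_dual (V - {v}) (link K v) = deletion (alexander_dual V K) v"
proof (rule set_eqI, rule iffI)
  fix \<sigma> assume "\<sigma> \<in> alexander_dual (V - {v}) (link K v)"
  then have \<sigma>: "\<sigma> \<subseteq> V - {v}" "V - {v} - \<sigma> \<notin> link K v"
    unfolding alexander_dual_def by auto
  have "insert v (V - {v} - \<sigma>) = V - \<sigma>" using \<sigma>(1) \<open>v \<in> V\<close> by auto
  with \<sigma>(2) have "V - \<sigma> \<notin> K"
    using simplicial_complex_subset_closed[OF K, of "V - \<sigma>" "V - {v} - \<sigma>"]
    unfolding link_def by auto
  with \<sigma>(1) show "\<sigma> \<in> deletion (alexander_dual V K) v"
    unfolding deletion_def alexander_dual_def by auto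
next
  fix \<sigma> assume "\<sigma> \<in> deletion (alexander_dual V K) v"
  then have \<sigma>: "\<sigma> \<subseteq> V - {v}" "V - \<sigma> \<notin> K"
    unfolding deletion_def alexander_dual_def by auto
  moreover have "insert v (V - {v} - \<sigma>) = V - \<sigma>" using \<sigma>(1) \<open>v \<in> V\<close> by auto
  ultimately show "\<sigma> \<in> alexander_dual (V - {v}) (link K v)"
    unfolding link_def alexander_dual_def by auto
qed

lemma alexander_dual_deletion:
  assumes K: "simplicial_complex V K" and "v \<in> V"
  shows "alexander_dual (V - {v}) (deletion K v) = link (alexander_dual V K) v"
proof (rule set_eqI, rule iffI)
  fix \<sigma> assume "\<sigma> \<in> alexander_dual (V - {v}) (deletion K v)"
  then have \<sigma>: "\<sigma> \<subseteq> V - {v}" "V - {v} - \<sigma> \<notin> K"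
    unfolding alexander_dual_def deletion_def by auto
  have "V - \<sigma> \<notin> K"
    using \<sigma>(2) simplicial_complex_subset_closed[OF K, of "V - \<sigma>" "V - {v} - \<sigma>"] by auto
  moreover have "V - insert v \<sigma> = V - {v} - \<sigma>" by auto
  ultimately show "\<sigma> \<in> link (alexander_dual V K) v"
    using \<sigma> \<open>v \<in> V\<close> unfolding link_def alexander_dual_def by auto
next
  fix \<sigma> assume "\<sigma> \<in> link (alexander_dual V K) v"
  then have "\<sigma> \<subseteq> V - {v}" "V - insert v \<sigma> \<notin> K"
    unfolding link_def alexander_dual_def by auto
  moreover have "V - insert v \<sigma> = V - {v} - \<sigma>" by auto
  ultimately show "\<sigma> \<in> alexander_dual (V - {v}) (deletion K v)"
    unfolding deletion_def alexander_dual_def by auto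
qed

theorem lemma2p3:
  fixes m :: nat and K :: "nat set set" and v :: nat
  assumes "simplicial_complex {1..m} K"
    and "vertex_decomposable {1..m} (alexander_dual {1..m} K)"
    and "shedding_vertex {1..m} (alexander_dual {1..m} K) v"
  shows "vertex_decomposable ({1..m} - {v}) (alexander_dual ({1..m} - {v}) (link K v))
       \<and> vertex_decomposable ({1..m} - {v}) (alexander_dual ({1..m} - {v}) (deletion K v))"
  using assms(3) alexander_dual_link[OF assms(1)] alexander_dual_deletion[OF assms(1)]
  unfolding shedding_vertex_def by auto

end
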